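(* Let $\mathcal D=\{\mathbf D_i:i\in I\}$ be a class of upwards-closed dependency notions, and for each $i\in I$ let $\gamma_i:\mathbb N\to\mathbb N$ be such that $\mathbf D_i$ is $\gamma_i$-bounded. Let $\phi\in\mathbf{FO}(\mathcal D)$ be a formula in which each $\mathbf D_i$ occurs $k_i$ times, and let $\nu_\phi(n)=\sum_{i\in I}k_i\gamma_i(n)$. Then for all finite structures $\mathfrak M$ and all teams $X$: if $\mathfrak M\models_X\phi$, then there exists $Y\subseteq X$ with $|Y|\le\nu_\phi(|M|)$ and $\mathfrak M\models_Y\phi$.
   Context: Team semantics (lax version). For a structure $\mathfrak M$ with domain $M$, a team $X$ is a (possibly empty) set of assignments $s:V\to M$, $V$ a finite set of variables; $X(\vec v)=\{s(\vec v):s\in X\}$. Satisfaction for formulas in negation normal form: first-order literal $\alpha$: every $s\in X$ satisfies $\alpha$ (Tarski); $\psi\vee\theta$: $X=Y\cup Z$ with $\mathfrak M\models_Y\psi$, $\mathfrak M\models_Z\theta$; $\psi\wedge\theta$: both; $\exists v\psi$: some $F:X\to\mathcal P(M)\setminus\{\emptyset\}$ with $\mathfrak M\models_{X[F/v]}\psi$, $X[F/v]=\{s[m/v]:s\in X,m\in F(s)\}$; $\forall v\psi$: $\mathfrak M\models_{X[M/v]}\psi$, $X[M/v]=\{s[m/v]:s\in X,m\in M\}$. A $k$-ary dependency notion $\mathbf D$ is an isomorphism-closed class of structures $(M,R)$, $R$ a $k$-ary relation; the atom $\mathbf D\vec v$ satisfies $\mathfrak M\models_X\mathbf D\vec v$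 iff $(M,X(\vec v))\in\mathbf D$. $\mathbf D$ is upwards-closed if $(M,R)\in\mathbf D$, $R\subseteq S$ imply $(M,S)\in\mathbf D$. For $\gamma:\mathbb N\to\mathbb N$, $\mathbf D$ is $\gamma$-bounded if for all finite structures $\mathfrak M$, teams $X$ and tuples $\vec v$, whenever $\mathfrak M\models_X\mathbf D\vec v$ there is $Y\subseteq X$ with $|Y|\le\gamma(|M|)$ and $\mathfrak M\models_Y\mathbf D\vec v$. $\mathbf{FO}(\mathcal D)$ is first-order logic in negation normal form extended with the atoms $\mathbf D\vec v$ for $\mathbf D\in\mathcal D$. *)

theory Defs
  imports Main
begin

datatype ('f, 'v) trm = Var 'v | Fn 'f "('f, 'v) trm list"

datatype ('f, 'r, 'i, 'v) fml =
    Eq "('f, 'v) trm" "('f, 'v) trm"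
  | NEq "('f, 'v) trm" "('f, 'v) trm"
  | Rel 'r "('f, 'v) trm list"
  | NRel 'r "('f, 'v) trm list"
  | Dep 'i "'v list"
  | Conj "('f, 'r, 'i, 'v) fml" "('f, 'r, 'i, 'v) fml"
  | Disj "('f, 'r, 'i, 'v) fml" "('f, 'r, 'i, 'v) fml"
  | Ex 'v "('f, 'r, 'i, 'v) fml"
  | All 'v "('f, 'r, 'i, 'v) fml"

fun fvt :: "('f, 'v) trm \<Rightarrow> 'v set" where
  "fvt (Var v) = {v}"
| "fvt (Fn f ts) = (\<Union>t\<in>set ts. fvt t)"

primrec fv :: "('f, 'r, 'i, 'v) fml \<Rightarrow> 'v set" where
  "fv (Eq t u) = fvt t \<union> fvt u"
| "fv (NEq t u) = fvt t \<union> fvt u"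
| "fv (Rel r ts) = (\<Union>t\<in>set ts. fvt t)"
| "fv (NRel r ts) = (\<Union>t\<in>set ts. fvt t)"
| "fv (Dep i vs) = set vs"
| "fv (Conj p q) = fv p \<union> fv q"
| "fv (Disj p q) = fv p \<union> fv q"
| "fv (Ex v p) = fv p - {v}"
| "fv (All v p) = fv p - {v}"

primrec occ :: "'i \<Rightarrow> ('f, 'r, 'i, 'v) fml \<Rightarrow> nat" where
  "occ i (Eq t u) = 0"
| "occ i (NEq t u) = 0"
| "occ i (Rel r ts) = 0"
| "occ i (NRel r ts) = 0"
| "occ i (Dep j vs) = (if i = j then 1 else 0)"
| "occ i (Conj p q) = occ i p + occ i q"
| "occ i (Disj p q) = occ i p + occ i q"
| "occ i (Ex v p) = occ i p"
| "occ i (All v p) = occ i p"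

primrec deps :: "('f, 'r, 'i, 'v) fml \<Rightarrow> 'i set" where
  "deps (Eq t u) = {}"
| "deps (NEq t u) = {}"
| "deps (Rel r ts) = {}"
| "deps (NRel r ts) = {}"
| "deps (Dep j vs) = {j}"
| "deps (Conj p q) = deps p \<union> deps q"
| "deps (Disj p q) = deps p \<union> deps q"
| "deps (Ex v p) = deps p"
| "deps (All v p) = deps p"

primrec wf_deps :: "('i \<Rightarrow> nat) \<Rightarrow> ('f, 'r, 'i, 'v) fml \<Rightarrow> bool" where
  "wf_deps ar (Eq t u) = True"
| "wf_deps ar (NEq t u) = True"
| "wf_deps ar (Rel r ts) = True"
| "wf_deps ar (NRel r ts) = True"
| "wf_deps ar (Dep j vs) = (length vs = ar j)"
| "wf_deps ar (Conj p q) = (wf_deps ar p \<and> wf_deps ar q)"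
| "wf_deps ar (Disj p q) = (wf_deps ar p \<and> wf_deps ar q)"
| "wf_deps ar (Ex v p) = wf_deps ar p"
| "wf_deps ar (All v p) = wf_deps ar p"

text \<open>A structure is given by its domain M, interpretations of function symbols FN and of
  relation symbols RL. Assignments are finite partial maps from variables to elements.\<close>

definition is_structure :: "'m set \<Rightarrow> ('f \<Rightarrow> 'm list \<Rightarrow> 'm) \<Rightarrow> bool" where
  "is_structure M FN \<longleftrightarrow> M \<noteq> {} \<and> (\<forall>f xs. set xs \<subseteq> M \<longrightarrow> FN f xs \<in> M)"

fun evalt :: "('f \<Rightarrow> 'm list \<Rightarrow> 'm) \<Rightarrow> ('v \<rightharpoonup> 'm) \<Rightarrow> ('f, 'v) trm \<Rightarrow> 'm" where
  "evalt FN s (Var v) = the (s v)"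
| "evalt FN s (Fn f ts) = FN f (map (evalt FN s) ts)"

definition is_team :: "'m set \<Rightarrow> 'v set \<Rightarrow> ('v \<rightharpoonup> 'm) set \<Rightarrow> bool" where
  "is_team M V X \<longleftrightarrow> finite V \<and> (\<forall>s\<in>X. dom s = V \<and> ran s \<subseteq> M)"

definition tuples :: "('v \<rightharpoonup> 'm) set \<Rightarrow> 'v list \<Rightarrow> 'm list set" where
  "tuples X vs = (\<lambda>s. map (\<lambda>v. the (s v)) vs) ` X"

section \<open>Lax team semantics\<close>

primrec sat :: "'m set \<Rightarrow> ('f \<Rightarrow> 'm list \<Rightarrow> 'm) \<Rightarrow> ('r \<Rightarrow> 'm list \<Rightarrow> bool)
    \<Rightarrow> ('i \<Rightarrow> 'm set \<Rightarrow> 'm list set \<Rightarrow> bool)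
    \<Rightarrow> ('v \<rightharpoonup> 'm) set \<Rightarrow> ('f, 'r, 'i, 'v) fml \<Rightarrow> bool" where
  "sat M FN RL D X (Eq t u) = (\<forall>s\<in>X. evalt FN s t = evalt FN s u)"
| "sat M FN RL D X (NEq t u) = (\<forall>s\<in>X. evalt FN s t \<noteq> evalt FN s u)"
| "sat M FN RL D X (Rel r ts) = (\<forall>s\<in>X. RL r (map (evalt FN s) ts))"
| "sat M FN RL D X (NRel r ts) = (\<forall>s\<in>X. \<not> RL r (map (evalt FN s) ts))"
| "sat M FN RL D X (Dep i vs) = D i M (tuples X vs)"
| "sat M FN RL D X (Conj p q) = (sat M FN RL D X p \<and> sat M FN RL D X q)"
| "sat M FN RL D X (Disj p q) =
     (\<exists>Y Z. X = Y \<union> Z \<and> sat M FN RL D Y p \<and> sat M FN RL D Z q)"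
| "sat M FN RL D X (Ex v p) =
     (\<exists>F. (\<forall>s\<in>X. F s \<subseteq> M \<and> F s \<noteq> {}) \<and>
          sat M FN RL D {s(v \<mapsto> m) | s m. s \<in> X \<and> m \<in> F s} p)"
| "sat M FN RL D X (All v p) =
     sat M FN RL D {s(v \<mapsto> m) | s m. s \<in> X \<and> m \<in> M} p"

text \<open>A k-ary dependency notion Dn (a class of structures (M,R), R \<subseteq> M^k), represented
  over the element type 'm, is isomorphism closed.\<close>
definition dep_notion :: "nat \<Rightarrow> ('m set \<Rightarrow> 'm list set \<Rightarrow> bool) \<Rightarrow> bool" where
  "dep_notion k Dn \<longleftrightarrow>
     (\<forall>M R. Dn M R \<longrightarrow> R \<subseteq> {xs. length xs = k \<and> set xs \<subseteq> M}) \<and>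
     (\<forall>M M' h R. bij_betw h M M' \<longrightarrow> R \<subseteq> {xs. length xs = k \<and> set xs \<subseteq> M} \<longrightarrow>
         (Dn M R \<longleftrightarrow> Dn M' (map h ` R)))"

definition upwards_closed :: "nat \<Rightarrow> ('m set \<Rightarrow> 'm list set \<Rightarrow> bool) \<Rightarrow> bool" where
  "upwards_closed k Dn \<longleftrightarrow>
     (\<forall>M R S. Dn M R \<longrightarrow> R \<subseteq> S \<longrightarrow> S \<subseteq> {xs. length xs = k \<and> set xs \<subseteq> M} \<longrightarrow> Dn M S)"

text \<open>gamma-boundedness, quantifying over all finite structures, teams (with variables of
  type 'v) and k-tuples of variables.\<close>
definition gamma_bounded ::
  "'v itself \<Rightarrow> nat \<Rightarrow> ('m set \<Rightarrow> 'm list set \<Rightarrow> bool) \<Rightarrow> (nat \<Rightarrow> nat) \<Rightarrow> bool" where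
  "gamma_bounded _ k Dn \<gamma> \<longleftrightarrow>
     (\<forall>M V (X :: ('v \<rightharpoonup> 'm) set) vs.
        finite M \<and> M \<noteq> {} \<and> is_team M V X \<and> set vs \<subseteq> V \<and> length vs = k \<and>
        Dn M (tuples X vs) \<longrightarrow>
        (\<exists>Y\<subseteq>X. card Y \<le> \<gamma> (card M) \<and> Dn M (tuples Y vs)))"

text \<open>nu_phi(n) = sum over i of k_i * gamma_i(n), k_i = number of occurrences of D_i in phi
  (only indices occurring in phi contribute nonzero terms).\<close>
definition nu :: "('i \<Rightarrow> nat \<Rightarrow> nat) \<Rightarrow> ('f, 'r, 'i, 'v) fml \<Rightarrow> nat \<Rightarrow> nat" where
  "nu \<gamma> \<phi> n = (\<Sum>i\<in>deps \<phi>. occ i \<phi> * \<gamma> i n)"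

end

theory Submission
  imports Defs
begin

text \<open>Induction on \<phi> proves more than a small satisfying subteam: a small certificate Y \<subseteq> X
  such that \<phi> holds in every team between Y and X. Such certificates are closed under the connectives:
  for \<and> and \<or> take the union of the certificates (of sizes adding up), and for the
  quantifiers pull a certificate of the extended team back along a choice of one origin per
  assignment, which does not increase its size. For an atom D_i, \<gamma>_i-boundedness provides the
  certificate and upwards closure makes it work for every larger team.\<close>

definition certificate :: "('a set \<Rightarrow> bool) \<Rightarrow> 'a set \<Rightarrow> 'a set \<Rightarrow> bool" where
  "certificate P X Y \<longleftrightarrow> Y \<subseteq> X \<and> (\<forall>Z. Y \<subseteq> Z \<longrightarrow> Z \<subseteq> X \<longrightarrow> P Z)"

lemma certificate_trivial: "(\<And>Z. Z \<subseteq> X \<Longrightarrow> P Z) \<Longrightarrow> certificate P X {}"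
  unfolding certificate_def by blast

lemma certificate_mono:
  "certificate P X Y \<Longrightarrow> (\<And>Z. Z \<subseteq> X \<Longrightarrow> P Z \<Longrightarrow> Q Z) \<Longrightarrow> certificate Q X Y"
  unfolding certificate_def by blast

lemma certificate_conj:
  "certificate P X Y1 \<Longrightarrow> certificate Q X Y2 \<Longrightarrow> certificate (\<lambda>Z. P Z \<and> Q Z) X (Y1 \<union> Y2)"
  unfolding certificate_def by auto

lemma certificate_union:
  assumes "certificate P X1 Y1" "certificate Q X2 Y2"
  shows "certificate (\<lambda>Z. \<exists>A B. Z = A \<union> B \<and> P A \<and> Q B) (X1 \<union> X2) (Y1 \<union> Y2)"
  unfolding certificate_def
proof (intro conjI allI impI)
  show "Y1 \<union> Y2 \<subseteq> X1 \<union> X2" using assms unfolding certificate_def by auto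
  fix Z assume Z: "Y1 \<union> Y2 \<subseteq> Z" "Z \<subseteq> X1 \<union> X2"
  have "P (Z \<inter> X1)" "Q (Z \<inter> X2)" using assms Z unfolding certificate_def by auto
  moreover have "Z = (Z \<inter> X1) \<union> (Z \<inter> X2)" using Z by auto
  ultimately show "\<exists>A B. Z = A \<union> B \<and> P A \<and> Q B" by blast
qed

(* The team X[F/v]; as an abbreviation it matches the right-hand sides of sat.simps for Ex and All. *)
abbreviation supplement :: "'v \<Rightarrow> (('v \<rightharpoonup> 'm) \<Rightarrow> 'm set) \<Rightarrow> ('v \<rightharpoonup> 'm) set \<Rightarrow> ('v \<rightharpoonup> 'm) set" where
  "supplement v F X \<equiv> {s(v \<mapsto> m) | s m. s \<in> X \<and> m \<in> F s}"

lemma certificate_supplement: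
  assumes cert: "certificate P (supplement v F X) Y'" and fin: "finite (supplement v F X)"
  shows "\<exists>Y. certificate (\<lambda>Z. P (supplement v F Z)) X Y \<and> card Y \<le> card Y'"
proof -
  have "\<forall>t\<in>Y'. \<exists>p. fst p \<in> X \<and> snd p \<in> F (fst p) \<and> t = (fst p)(v \<mapsto> snd p)"
    using cert unfolding certificate_def by fastforce
  then obtain origin where origin:
    "\<forall>t\<in>Y'. fst (origin t) \<in> X \<and> snd (origin t) \<in> F (fst (origin t)) \<and>
       t = (fst (origin t))(v \<mapsto> snd (origin t))"
    by metis
  let ?Y = "(fst \<circ> origin) ` Y'"
  have covers: "Y' \<subseteq> supplement v F Z" if "?Y \<subseteq> Z" for Z
  proof
    fix t assume "t \<in> Y'"
    then show "t \<in> supplement v F Z"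
      using origin that by (intro CollectI exI[of _ "fst (origin t)"] exI[of _ "snd (origin t)"]) auto
  qed
  have "certificate (\<lambda>Z. P (supplement v F Z)) X ?Y"
    unfolding certificate_def
  proof (intro conjI allI impI)
    show "?Y \<subseteq> X" using origin by auto
    fix Z assume "?Y \<subseteq> Z" "Z \<subseteq> X"
    moreover from \<open>Z \<subseteq> X\<close> have "supplement v F Z \<subseteq> supplement v F X" by blast
    ultimately show "P (supplement v F Z)"
      using cert covers unfolding certificate_def by simp
  qed
  moreover have "finite Y'" using cert fin unfolding certificate_def by (meson finite_subset)
  then have "card ?Y \<le> card Y'" by (rule card_image_le)
  ultimately show ?thesis by blast
qed

lemma occ_eq_0_if_notin_deps: "i \<notin> deps \<phi> \<Longrightarrow> occ i \<phi> = 0"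
  by (induction \<phi>) auto

lemma finite_deps: "finite (deps \<phi>)"
  by (induction \<phi>) auto

lemma nu_eq_sum:
  assumes "finite S" "deps \<phi> \<subseteq> S"
  shows "nu \<gamma> \<phi> n = (\<Sum>i\<in>S. occ i \<phi> * \<gamma> i n)"
  unfolding nu_def
  by (rule sum.mono_neutral_left) (use assms occ_eq_0_if_notin_deps in auto)

lemma nu_add:
  assumes "deps \<psi> = deps \<phi>1 \<union> deps \<phi>2" "\<And>i. occ i \<psi> = occ i \<phi>1 + occ i \<phi>2"
  shows "nu \<gamma> \<psi> n = nu \<gamma> \<phi>1 n + nu \<gamma> \<phi>2 n"
proof -
  let ?S = "deps \<phi>1 \<union> deps \<phi>2"
  have "finite ?S" by (simp add: finite_deps)
  then show ?thesis
    using nu_eq_sum[of ?S \<psi>] nu_eq_sum[of ?S \<phi>1] nu_eq_sum[of ?S \<phi>2] assms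
    by (simp add: sum.distrib distrib_right)
qed

lemma nu_Conj [simp]: "nu \<gamma> (Conj \<phi>1 \<phi>2) n = nu \<gamma> \<phi>1 n + nu \<gamma> \<phi>2 n"
  and nu_Disj [simp]: "nu \<gamma> (Disj \<phi>1 \<phi>2) n = nu \<gamma> \<phi>1 n + nu \<gamma> \<phi>2 n"
  by (rule nu_add; simp)+

lemma nu_Dep [simp]: "nu \<gamma> (Dep i vs) n = \<gamma> i n"
  and nu_Ex [simp]: "nu \<gamma> (Ex v \<phi>) n = nu \<gamma> \<phi> n"
  and nu_All [simp]: "nu \<gamma> (All v \<phi>) n = nu \<gamma> \<phi> n"
  by (simp_all add: nu_def)

lemma finite_team:
  assumes "is_team M V X" "finite M"
  shows "finite X"
proof (rule finite_subset)
  show "X \<subseteq> {s. dom s = V \<and> ran s \<subseteq> M}" using assms unfolding is_team_def by auto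
  show "finite {s. dom s = V \<and> ran s \<subseteq> M}"
    using assms unfolding is_team_def by (simp add: finite_set_of_finite_maps)
qed

lemma is_team_supplement:
  assumes "is_team M V X" "\<forall>s\<in>X. F s \<subseteq> M"
  shows "is_team M (insert v V) (supplement v F X)"
  using assms unfolding is_team_def
  by (auto simp: ran_def split: if_splits) blast+

lemma is_team_subset: "is_team M V X \<Longrightarrow> Z \<subseteq> X \<Longrightarrow> is_team M V Z"
  unfolding is_team_def by (meson subsetD)

lemma tuples_subset_lists:
  assumes "is_team M V X" "set vs \<subseteq> V"
  shows "tuples X vs \<subseteq> {xs. length xs = length vs \<and> set xs \<subseteq> M}"
proof -
  have "the (s v) \<in> M" if "s \<in> X" "v \<in> set vs" for s v
  proof -
    from that assms obtain a where "s v = Some a" "ran s \<subseteq> M"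
      unfolding is_team_def by blast
    then show ?thesis by (auto simp: ran_def)
  qed
  then show ?thesis unfolding tuples_def by auto
qed

lemma tuples_mono: "Y \<subseteq> Z \<Longrightarrow> tuples Y vs \<subseteq> tuples Z vs"
  unfolding tuples_def by (rule image_mono)

lemma dep_certificate:
  assumes upw: "upwards_closed k Dn" and bdd: "gamma_bounded TYPE('v) k Dn \<gamma>"
    and k: "length vs = k" and "finite M" "M \<noteq> {}" and team: "is_team M V (X :: ('v \<rightharpoonup> 'm) set)"
    and vs: "set vs \<subseteq> V" and "Dn M (tuples X vs)"
  shows "\<exists>Y. certificate (\<lambda>Z. Dn M (tuples Z vs)) X Y \<and> card Y \<le> \<gamma> (card M)"
proof -
  obtain Y where Y: "Y \<subseteq> X" "card Y \<le> \<gamma> (card M)" "Dn M (tuples Y vs)"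
    using bdd[unfolded gamma_bounded_def, rule_format, of M V X vs] assms by auto
  have "Dn M (tuples Z vs)" if "Y \<subseteq> Z" "Z \<subseteq> X" for Z
  proof -
    have "tuples Y vs \<subseteq> tuples Z vs" using \<open>Y \<subseteq> Z\<close> by (rule tuples_mono)
    moreover have "tuples Z vs \<subseteq> {xs. length xs = k \<and> set xs \<subseteq> M}"
      using tuples_subset_lists[OF is_team_subset[OF team \<open>Z \<subseteq> X\<close>] vs] k by simp
    ultimately show ?thesis using upw Y(3) unfolding upwards_closed_def by auto
  qed
  with Y show ?thesis unfolding certificate_def by auto
qed

lemma certificate_Ex:
  assumes team: "is_team M V X" and "finite M" and F: "\<forall>s\<in>X. F s \<subseteq> M \<and> F s \<noteq> {}"
    and cert: "certificate (\<lambda>Z. sat M FN RL D Z \<phi>) (supplement v F X) Y'"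
  shows "\<exists>Y. certificate (\<lambda>Z. sat M FN RL D Z (Ex v \<phi>)) X Y \<and> card Y \<le> card Y'"
proof -
  have "is_team M (insert v V) (supplement v F X)"
    by (rule is_team_supplement[OF team]) (use F in blast)
  then have "finite (supplement v F X)" using \<open>finite M\<close> by (rule finite_team)
  then obtain Y where Y: "certificate (\<lambda>Z. sat M FN RL D (supplement v F Z) \<phi>) X Y" "card Y \<le> card Y'"
    using certificate_supplement[OF cert] by blast
  have "certificate (\<lambda>Z. sat M FN RL D Z (Ex v \<phi>)) X Y"
  proof (rule certificate_mono[OF Y(1)])
    fix Z assume "Z \<subseteq> X" "sat M FN RL D (supplement v F Z) \<phi>"
    then show "sat M FN RL D Z (Ex v \<phi>)"
      unfolding sat.simps using F by (intro exI[of _ F] conjI) auto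
  qed
  with Y(2) show ?thesis by blast
qed

lemma certificate_All:
  assumes team: "is_team M V X" and "finite M"
    and cert: "certificate (\<lambda>Z. sat M FN RL D Z \<phi>) (supplement v (\<lambda>_. M) X) Y'"
  shows "\<exists>Y. certificate (\<lambda>Z. sat M FN RL D Z (All v \<phi>)) X Y \<and> card Y \<le> card Y'"
proof -
  have "is_team M (insert v V) (supplement v (\<lambda>_. M) X)"
    by (rule is_team_supplement[OF team]) simp
  then have "finite (supplement v (\<lambda>_. M) X)" using \<open>finite M\<close> by (rule finite_team)
  then show ?thesis using certificate_supplement[OF cert] by simp
qed

lemma sat_small_certificate:
  fixes \<phi> :: "('f, 'r, 'i, 'v) fml"
  assumes upw: "\<And>i. upwards_closed (ar i) (D i)"
    and bdd: "\<And>i. gamma_bounded TYPE('v) (ar i) (D i) (\<gamma> i)"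
    and M: "finite M" "M \<noteq> {}"
  shows "wf_deps ar \<phi> \<Longrightarrow> is_team M V X \<Longrightarrow> fv \<phi> \<subseteq> V \<Longrightarrow> sat M FN RL D X \<phi> \<Longrightarrow>
    \<exists>Y. certificate (\<lambda>Z. sat M FN RL D Z \<phi>) X Y \<and> card Y \<le> nu \<gamma> \<phi> (card M)"
proof (induction \<phi> arbitrary: V X)
  case (Dep i vs)
  then show ?case using dep_certificate[OF upw[of i] bdd[of i] _ M] by simp
next
  case (Conj \<phi>1 \<phi>2)
  obtain Y1 where Y1: "certificate (\<lambda>Z. sat M FN RL D Z \<phi>1) X Y1" "card Y1 \<le> nu \<gamma> \<phi>1 (card M)"
    using Conj.IH(1)[of V X] Conj.prems by auto
  obtain Y2 where Y2: "certificate (\<lambda>Z. sat M FN RL D Z \<phi>2) X Y2" "card Y2 \<le> nu \<gamma> \<phi>2 (card M)"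
    using Conj.IH(2)[of V X] Conj.prems by auto
  have "certificate (\<lambda>Z. sat M FN RL D Z (Conj \<phi>1 \<phi>2)) X (Y1 \<union> Y2)"
    using certificate_conj[OF Y1(1) Y2(1)] by simp
  moreover have "card (Y1 \<union> Y2) \<le> nu \<gamma> (Conj \<phi>1 \<phi>2) (card M)"
    using card_Un_le[of Y1 Y2] Y1(2) Y2(2) by simp
  ultimately show ?case by blast
next
  case (Disj \<phi>1 \<phi>2)
  then obtain X1 X2 where X: "X = X1 \<union> X2" "sat M FN RL D X1 \<phi>1" "sat M FN RL D X2 \<phi>2"
    by auto
  have "is_team M V X1" "is_team M V X2"
    using is_team_subset[OF Disj.prems(2)] X(1) by auto
  then obtain Y1 Y2 where
    Y1: "certificate (\<lambda>Z. sat M FN RL D Z \<phi>1) X1 Y1" "card Y1 \<le> nu \<gamma> \<phi>1 (card M)" and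
    Y2: "certificate (\<lambda>Z. sat M FN RL D Z \<phi>2) X2 Y2" "card Y2 \<le> nu \<gamma> \<phi>2 (card M)"
    using Disj.IH(1)[of V X1] Disj.IH(2)[of V X2] Disj.prems X by auto
  have "certificate (\<lambda>Z. sat M FN RL D Z (Disj \<phi>1 \<phi>2)) X (Y1 \<union> Y2)"
    using certificate_union[OF Y1(1) Y2(1)] X(1) by simp
  moreover have "card (Y1 \<union> Y2) \<le> nu \<gamma> (Disj \<phi>1 \<phi>2) (card M)"
    using card_Un_le[of Y1 Y2] Y1(2) Y2(2) by simp
  ultimately show ?case by blast
next
  case (Ex v \<phi>)
  then obtain F where F: "\<forall>s\<in>X. F s \<subseteq> M \<and> F s \<noteq> {}"
    and sat_F: "sat M FN RL D (supplement v F X) \<phi>" by auto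
  have "is_team M (insert v V) (supplement v F X)"
    by (rule is_team_supplement[OF Ex.prems(2)]) (use F in blast)
  moreover have "wf_deps ar \<phi>" "fv \<phi> \<subseteq> insert v V" using Ex.prems(1,3) by auto
  ultimately obtain Y' where Y': "certificate (\<lambda>Z. sat M FN RL D Z \<phi>) (supplement v F X) Y'"
    "card Y' \<le> nu \<gamma> \<phi> (card M)"
    using Ex.IH sat_F by blast
  then show ?case using certificate_Ex[OF Ex.prems(2) \<open>finite M\<close> F Y'(1)] by (auto intro: le_trans)
next
  case (All v \<phi>)
  have "is_team M (insert v V) (supplement v (\<lambda>_. M) X)"
    by (rule is_team_supplement[OF All.prems(2)]) simp
  moreover have "wf_deps ar \<phi>" "fv \<phi> \<subseteq> insert v V" "sat M FN RL D (supplement v (\<lambda>_. M) X) \<phi>"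
    using All.prems(1,3,4) by auto
  ultimately obtain Y' where Y': "certificate (\<lambda>Z. sat M FN RL D Z \<phi>) (supplement v (\<lambda>_. M) X) Y'"
    "card Y' \<le> nu \<gamma> \<phi> (card M)"
    using All.IH by blast
  then show ?case using certificate_All[OF All.prems(2) \<open>finite M\<close> Y'(1)] by (auto intro: le_trans)
qed (auto intro!: exI[of _ "{}"] certificate_trivial simp: nu_def)

theorem mainTheorem7:
  fixes ar :: "'i \<Rightarrow> nat"
    and D :: "'i \<Rightarrow> 'm set \<Rightarrow> 'm list set \<Rightarrow> bool"
    and \<gamma> :: "'i \<Rightarrow> nat \<Rightarrow> nat"
    and \<phi> :: "('f, 'r, 'i, 'v) fml"
    and M :: "'m set"
    and FN :: "'f \<Rightarrow> 'm list \<Rightarrow> 'm"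
    and RL :: "'r \<Rightarrow> 'm list \<Rightarrow> bool"
    and V :: "'v set"
    and X :: "('v \<rightharpoonup> 'm) set"
  assumes notions: "\<And>i. dep_notion (ar i) (D i)"
    and upw: "\<And>i. upwards_closed (ar i) (D i)"
    and bdd: "\<And>i. gamma_bounded TYPE('v) (ar i) (D i) (\<gamma> i)"
    and wf: "wf_deps ar \<phi>"
    and struct: "is_structure M FN" and fin: "finite M"
    and team: "is_team M V X" and fvs: "fv \<phi> \<subseteq> V"
    and sat: "sat M FN RL D X \<phi>"
  shows "\<exists>Y\<subseteq>X. card Y \<le> nu \<gamma> \<phi> (card M) \<and> sat M FN RL D Y \<phi>"
proof -
  have "M \<noteq> {}" using struct unfolding is_structure_def by blast
  then obtain Y where cert: "certificate (\<lambda>Z. sat M FN RL D Z \<phi>) X Y"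
    and small: "card Y \<le> nu \<gamma> \<phi> (card M)"
    using sat_small_certificate[OF upw bdd fin _ wf team fvs sat] by blast
  from cert have "Y \<subseteq> X" "sat M FN RL D Y \<phi>" unfolding certificate_def by auto
  with small show ?thesis by blast
qed

end
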